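(* Let $\Gamma=\mathbb{A}^1\setminus\{0,1\}$. For every closed embedding $\tau\colon\Gamma\to\mathbb{A}^2$, there exists an automorphism $g\in\mathrm{Aut}(\Gamma)$ such that there is no $h\in\mathrm{Aut}(\mathbb{A}^2)$ with $h\circ\tau=\tau\circ g$.
   Context: All varieties are over $\mathbb{C}$; $\mathrm{Aut}$ denotes the group of algebraic automorphisms. *)

theory Defs
  imports Complex_Main "HOL-Computational_Algebra.Polynomial"
begin

definition Gamma :: "complex set" where
  "Gamma = UNIV - {0, 1}"

text \<open>Regular functions on Gamma: elements of C[t, 1/t, 1/(t-1)], i.e.
  functions of the form p(t) / (t^a (t-1)^b) with p a polynomial.\<close>
definition regular_Gamma :: "(complex \<Rightarrow> complex) \<Rightarrow> bool" where
  "regular_Gamma f \<longleftrightarrow> (\<exists>(p::complex poly) (a::nat) (b::nat).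
      \<forall>t\<in>Gamma. f t = poly p t / (t ^ a * (t - 1) ^ b))"

definition poly2 :: "(complex \<times> complex \<Rightarrow> complex) \<Rightarrow> bool" where
  "poly2 f \<longleftrightarrow> (\<exists>(c::nat \<Rightarrow> nat \<Rightarrow> complex) (N::nat).
      \<forall>x y. f (x, y) = (\<Sum>i\<le>N. \<Sum>j\<le>N. c i j * x ^ i * y ^ j))"

definition morphism_Gamma_A2 :: "(complex \<Rightarrow> complex \<times> complex) \<Rightarrow> bool" where
  "morphism_Gamma_A2 \<tau> \<longleftrightarrow> regular_Gamma (\<lambda>t. fst (\<tau> t)) \<and> regular_Gamma (\<lambda>t. snd (\<tau> t))"

text \<open>Closed embedding of affine varieties: the comorphism C[X,Y] -> O(Gamma) is surjective,
  i.e. the generators t, 1/t, 1/(t-1) of O(Gamma) are pullbacks of polynomials.\<close>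
definition closed_embedding_Gamma_A2 :: "(complex \<Rightarrow> complex \<times> complex) \<Rightarrow> bool" where
  "closed_embedding_Gamma_A2 \<tau> \<longleftrightarrow> morphism_Gamma_A2 \<tau> \<and>
     (\<exists>P Q R. poly2 P \<and> poly2 Q \<and> poly2 R \<and>
        (\<forall>t\<in>Gamma. P (\<tau> t) = t \<and> Q (\<tau> t) = 1 / t \<and> R (\<tau> t) = 1 / (t - 1)))"

definition morphism_Gamma :: "(complex \<Rightarrow> complex) \<Rightarrow> bool" where
  "morphism_Gamma g \<longleftrightarrow> g ` Gamma \<subseteq> Gamma \<and> regular_Gamma g"

definition Aut_Gamma :: "(complex \<Rightarrow> complex) set" where
  "Aut_Gamma = {g. morphism_Gamma g \<and>
     (\<exists>g'. morphism_Gamma g' \<and> (\<forall>t\<in>Gamma. g' (g t) = t \<and> g (g' t) = t))}"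

definition poly_map_A2 :: "(complex \<times> complex \<Rightarrow> complex \<times> complex) \<Rightarrow> bool" where
  "poly_map_A2 h \<longleftrightarrow> poly2 (\<lambda>z. fst (h z)) \<and> poly2 (\<lambda>z. snd (h z))"

definition Aut_A2 :: "(complex \<times> complex \<Rightarrow> complex \<times> complex) set" where
  "Aut_A2 = {h. poly_map_A2 h \<and>
     (\<exists>h'. poly_map_A2 h' \<and> (\<forall>z. h' (h z) = z \<and> h (h' z) = z))}"

end

theory Submission
  imports Defs "HOL-Computational_Algebra.Polynomial_Factorial"
    "HOL-Computational_Algebra.Fundamental_Theorem_Algebra" "HOL-Computational_Algebra.Field_as_Ring"
begin

text \<open>Suppose the automorphism \<open>g t = 1 / (1 - t)\<close> of \<open>\<Gamma>\<close>, which permutes the punctures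
  \<open>0, 1, \<infinity>\<close> cyclically, were induced by a polynomial automorphism \<open>h\<close> of \<open>\<complex>\<^sup>2\<close>.
  Let \<open>F\<close> generate the ideal of the curve \<open>\<tau>(\<Gamma>)\<close>; the curve is smooth, \<open>F \<circ> h = l F\<close> for a
  constant \<open>l \<noteq> 0\<close>, and \<open>h\<close> has constant Jacobian \<open>J \<noteq> 0\<close>. Hence the residue
  \<open>\<omega> = dx / F\<^sub>y\<close> of \<open>dx \<and> dy / F\<close>, a nowhere vanishing regular 1-form on \<open>\<Gamma>\<close>, satisfies
  \<open>g\<^sup>* \<omega> = (J / l) \<omega>\<close>. But the nowhere vanishing forms on \<open>\<Gamma>\<close> are
  \<open>c t\<^sup>m (t - 1)\<^sup>n dt\<close>, and comparing their orders at the punctures shows that none of them is an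
  eigenvector of \<open>g\<^sup>*\<close>.\<close>

section \<open>Polynomials in two variables\<close>

text \<open>A polynomial in \<open>y\<close> whose coefficients are polynomials in \<open>x\<close>.\<close>
definition bpoly :: "complex poly poly \<Rightarrow> complex \<Rightarrow> complex \<Rightarrow> complex" where
  "bpoly F x y = poly (poly F [:y:]) x"

lemma bpoly_pCons [simp]: "bpoly (pCons c F) x y = poly c x + y * bpoly F x y"
  by (simp add: bpoly_def)

lemma bpoly_0 [simp]: "bpoly 0 x y = 0"
  and bpoly_1 [simp]: "bpoly 1 x y = 1"
  and bpoly_const [simp]: "bpoly [:[:c:]:] x y = c"
  and bpoly_X [simp]: "bpoly [:[:0, 1:]:] x y = x"
  and bpoly_Y [simp]: "bpoly [:0, 1:] x y = y"
  by (simp_all add: bpoly_def)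

lemma bpoly_add [simp]: "bpoly (A + B) x y = bpoly A x y + bpoly B x y"
  and bpoly_diff [simp]: "bpoly (A - B) x y = bpoly A x y - bpoly B x y"
  and bpoly_minus [simp]: "bpoly (- A) x y = - bpoly A x y"
  and bpoly_mult [simp]: "bpoly (A * B) x y = bpoly A x y * bpoly B x y"
  by (simp_all add: bpoly_def)

lemma bpoly_power [simp]: "bpoly (A ^ n) x y = bpoly A x y ^ n"
  by (induct n) auto

lemma bpoly_eq_poly_map_poly: "bpoly F x y = poly (map_poly (\<lambda>c. poly c x) F) y"
  by (induct F) (auto simp: map_poly_pCons)

lemma bpoly_eq_0_imp_eq_0:
  assumes "\<And>x y. bpoly F x y = 0"
  shows "F = 0"
proof -
  have "\<And>x. map_poly (\<lambda>c. poly c x) F = 0"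
    using assms by (simp add: bpoly_eq_poly_map_poly poly_all_0_iff_0[symmetric])
  hence "\<And>x j. poly (coeff F j) x = 0"
    by (metis coeff_0 coeff_map_poly poly_0)
  hence "\<And>j. coeff F j = 0" by (meson poly_all_0_iff_0)
  thus ?thesis by (simp add: poly_eq_iff)
qed

lemma bpoly_nonvanishing_imp_constant:
  assumes "\<And>x y. bpoly F x y \<noteq> 0"
  shows "\<exists>c. \<forall>x y. bpoly F x y = c"
proof -
  have "poly (coeff F j) x = 0" if "j \<ge> 1" for x j
  proof -
    let ?q = "map_poly (\<lambda>c. poly c x) F"
    have "\<forall>y. poly ?q y \<noteq> 0" using assms by (simp add: bpoly_eq_poly_map_poly)
    hence "degree ?q = 0"
      using fundamental_theorem_of_algebra constant_degree by blast
    hence "coeff ?q j = 0" using that by (simp add: coeff_eq_0)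
    thus "poly (coeff F j) x = 0" by (simp add: coeff_map_poly)
  qed
  hence "coeff F j = 0" if "j \<ge> 1" for j using that by (meson poly_all_0_iff_0)
  hence F: "F = [:coeff F 0:]"
    by (intro poly_eqI) (metis coeff_pCons_0 coeff_pCons_Suc coeff_0 le_add1 not0_implies_Suc plus_1_eq_Suc)
  have "\<forall>x. poly (coeff F 0) x \<noteq> 0"
    using assms by (subst (asm) F) (simp add: bpoly_def)
  then obtain c where "\<And>x. poly (coeff F 0) x = c"
    using fundamental_theorem_of_algebra unfolding constant_def by blast
  hence "\<forall>x y. bpoly F x y = c" by (subst F) (simp add: bpoly_def)
  thus ?thesis by blast
qed

definition bpoly_fun :: "(complex \<Rightarrow> complex \<Rightarrow> complex) \<Rightarrow> bool" where
  "bpoly_fun f \<longleftrightarrow> (\<exists>F. \<forall>x y. f x y = bpoly F x y)"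

lemma bpoly_fun_bpoly [simp]: "bpoly_fun (bpoly F)"
  unfolding bpoly_fun_def by blast

lemma bpoly_fun_const: "bpoly_fun (\<lambda>x y. c)"
  and bpoly_fun_x: "bpoly_fun (\<lambda>x y. x)"
  and bpoly_fun_y: "bpoly_fun (\<lambda>x y. y)"
  unfolding bpoly_fun_def by (metis bpoly_const, metis bpoly_X, metis bpoly_Y)

lemma bpoly_fun_add: "bpoly_fun f \<Longrightarrow> bpoly_fun g \<Longrightarrow> bpoly_fun (\<lambda>x y. f x y + g x y)"
  and bpoly_fun_mult: "bpoly_fun f \<Longrightarrow> bpoly_fun g \<Longrightarrow> bpoly_fun (\<lambda>x y. f x y * g x y)"
  unfolding bpoly_fun_def by (metis bpoly_add, metis bpoly_mult)

lemma bpoly_fun_power: "bpoly_fun f \<Longrightarrow> bpoly_fun (\<lambda>x y. f x y ^ n)"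
  by (induct n) (auto intro: bpoly_fun_mult bpoly_fun_const)

lemma bpoly_fun_sum:
  "finite S \<Longrightarrow> (\<And>i. i \<in> S \<Longrightarrow> bpoly_fun (f i)) \<Longrightarrow> bpoly_fun (\<lambda>x y. \<Sum>i\<in>S. f i x y)"
  by (induct S rule: finite_induct) (auto intro: bpoly_fun_add bpoly_fun_const)

lemma bpoly_fun_poly_comp: "bpoly_fun a \<Longrightarrow> bpoly_fun (\<lambda>x y. poly c (a x y))"
  by (induct c) (auto intro: bpoly_fun_add bpoly_fun_mult bpoly_fun_const)

lemma bpoly_fun_bpoly_comp:
  assumes "bpoly_fun a" "bpoly_fun b"
  shows "bpoly_fun (\<lambda>x y. bpoly F (a x y) (b x y))"
proof (induct F)
  case (pCons c F)
  then show ?case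
    using bpoly_fun_add[OF bpoly_fun_poly_comp[OF assms(1)] bpoly_fun_mult[OF assms(2) pCons(2)]] by simp
qed (simp add: bpoly_fun_const)

lemma bpoly_comp_eq_bpoly: "\<exists>G. \<forall>x y. bpoly F (bpoly A x y) (bpoly B x y) = bpoly G x y"
  using bpoly_fun_bpoly_comp[OF bpoly_fun_bpoly bpoly_fun_bpoly] unfolding bpoly_fun_def by blast

lemma poly2_eq_bpoly:
  assumes "poly2 f"
  shows "\<exists>F. \<forall>z. f z = bpoly F (fst z) (snd z)"
proof -
  obtain c N where c: "\<forall>x y. f (x, y) = (\<Sum>i\<le>N. \<Sum>j\<le>N. c i j * x ^ i * y ^ j)"
    using assms unfolding poly2_def by blast
  have "bpoly_fun (\<lambda>x y. \<Sum>i\<le>N. \<Sum>j\<le>N. c i j * x ^ i * y ^ j)"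
    by (intro bpoly_fun_sum bpoly_fun_mult bpoly_fun_const bpoly_fun_power bpoly_fun_x bpoly_fun_y) auto
  then obtain F where "\<forall>x y. (\<Sum>i\<le>N. \<Sum>j\<le>N. c i j * x ^ i * y ^ j) = bpoly F x y"
    unfolding bpoly_fun_def by blast
  thus ?thesis using c by (metis prod.collapse)
qed

definition pderiv_x :: "complex poly poly \<Rightarrow> complex poly poly" where
  "pderiv_x F = map_poly pderiv F"

definition pderiv_y :: "complex poly poly \<Rightarrow> complex poly poly" where
  "pderiv_y F = pderiv F"

lemma pderiv_x_pCons [simp]: "pderiv_x (pCons c F) = pCons (pderiv c) (pderiv_x F)"
  by (simp add: pderiv_x_def map_poly_pCons)

lemma pderiv_y_pCons [simp]: "pderiv_y (pCons c F) = F + pCons 0 (pderiv_y F)"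
  by (simp add: pderiv_y_def pderiv_pCons)

lemma pderiv_x_0 [simp]: "pderiv_x 0 = 0"
  and pderiv_y_0 [simp]: "pderiv_y 0 = 0"
  by (simp_all add: pderiv_x_def pderiv_y_def)

lemma pderiv_x_diff [simp]: "pderiv_x (A - B) = pderiv_x A - pderiv_x B"
  by (simp add: pderiv_x_def poly_eq_iff coeff_map_poly pderiv_diff)

lemma pderiv_y_diff [simp]: "pderiv_y (A - B) = pderiv_y A - pderiv_y B"
  by (simp add: pderiv_y_def pderiv_diff)

lemma pderiv_x_minus [simp]: "pderiv_x (- A) = - pderiv_x A"
  and pderiv_y_minus [simp]: "pderiv_y (- A) = - pderiv_y A"
  using pderiv_x_diff[of 0 A] pderiv_y_diff[of 0 A] by simp_all

lemma bpoly_has_field_derivative: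
  assumes "(a has_field_derivative a') (at t within S)" "(b has_field_derivative b') (at t within S)"
  shows "((\<lambda>t. bpoly F (a t) (b t)) has_field_derivative
           bpoly (pderiv_x F) (a t) (b t) * a' + bpoly (pderiv_y F) (a t) (b t) * b') (at t within S)"
proof (induct F)
  case 0 then show ?case by simp
next
  case (pCons c F)
  have "((\<lambda>t. poly c (a t)) has_field_derivative poly (pderiv c) (a t) * a') (at t within S)"
    using DERIV_chain2[OF poly_DERIV assms(1)] by simp
  from DERIV_add[OF this DERIV_mult'[OF assms(2) pCons(2)]] show ?case
    by (simp add: algebra_simps)
qed

lemma bpoly_has_field_derivative_x:
  "((\<lambda>s. bpoly F s y) has_field_derivative bpoly (pderiv_x F) x y) (at x)"
  using bpoly_has_field_derivative[of "\<lambda>s. s" 1 x UNIV "\<lambda>s. y" 0 F] by simp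

lemma bpoly_has_field_derivative_y:
  "((\<lambda>s. bpoly F x s) has_field_derivative bpoly (pderiv_y F) x y) (at y)"
  using bpoly_has_field_derivative[of "\<lambda>s. x" 0 y UNIV "\<lambda>s. s" 1 F] by simp

lemma bpoly_pderiv_x_mult:
  "bpoly (pderiv_x (F * G)) x y = bpoly (pderiv_x F) x y * bpoly G x y + bpoly F x y * bpoly (pderiv_x G) x y"
proof -
  have "((\<lambda>s. bpoly (F * G) s y) has_field_derivative
      bpoly F x y * bpoly (pderiv_x G) x y + bpoly (pderiv_x F) x y * bpoly G x y) (at x)"
    using DERIV_mult'[OF bpoly_has_field_derivative_x[of F y x] bpoly_has_field_derivative_x[of G y x]] by simp
  from DERIV_unique[OF bpoly_has_field_derivative_x this] show ?thesis by (simp add: algebra_simps)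
qed

lemma bpoly_pderiv_y_mult:
  "bpoly (pderiv_y (F * G)) x y = bpoly (pderiv_y F) x y * bpoly G x y + bpoly F x y * bpoly (pderiv_y G) x y"
proof -
  have "((\<lambda>s. bpoly (F * G) x s) has_field_derivative
      bpoly F x y * bpoly (pderiv_y G) x y + bpoly (pderiv_y F) x y * bpoly G x y) (at y)"
    using DERIV_mult'[OF bpoly_has_field_derivative_y[of F x y] bpoly_has_field_derivative_y[of G x y]] by simp
  from DERIV_unique[OF bpoly_has_field_derivative_y this] show ?thesis by (simp add: algebra_simps)
qed

lemma bpoly_comp_pderiv_x:
  assumes "\<And>a b. bpoly F (bpoly H1 a b) (bpoly H2 a b) = bpoly G a b"
  shows "bpoly (pderiv_x F) (bpoly H1 a b) (bpoly H2 a b) * bpoly (pderiv_x H1) a b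
       + bpoly (pderiv_y F) (bpoly H1 a b) (bpoly H2 a b) * bpoly (pderiv_x H2) a b
       = bpoly (pderiv_x G) a b"
proof -
  have "((\<lambda>u. bpoly F (bpoly H1 u b) (bpoly H2 u b)) has_field_derivative
      bpoly (pderiv_x F) (bpoly H1 a b) (bpoly H2 a b) * bpoly (pderiv_x H1) a b
      + bpoly (pderiv_y F) (bpoly H1 a b) (bpoly H2 a b) * bpoly (pderiv_x H2) a b) (at a)"
    by (rule bpoly_has_field_derivative[OF bpoly_has_field_derivative_x bpoly_has_field_derivative_x])
  then show ?thesis
    unfolding assms by (rule DERIV_unique[OF _ bpoly_has_field_derivative_x])
qed

lemma bpoly_comp_pderiv_y:
  assumes "\<And>a b. bpoly F (bpoly H1 a b) (bpoly H2 a b) = bpoly G a b"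
  shows "bpoly (pderiv_x F) (bpoly H1 a b) (bpoly H2 a b) * bpoly (pderiv_y H1) a b
       + bpoly (pderiv_y F) (bpoly H1 a b) (bpoly H2 a b) * bpoly (pderiv_y H2) a b
       = bpoly (pderiv_y G) a b"
proof -
  have "((\<lambda>u. bpoly F (bpoly H1 a u) (bpoly H2 a u)) has_field_derivative
      bpoly (pderiv_x F) (bpoly H1 a b) (bpoly H2 a b) * bpoly (pderiv_y H1) a b
      + bpoly (pderiv_y F) (bpoly H1 a b) (bpoly H2 a b) * bpoly (pderiv_y H2) a b) (at b)"
    by (rule bpoly_has_field_derivative[OF bpoly_has_field_derivative_y bpoly_has_field_derivative_y])
  then show ?thesis
    unfolding assms by (rule DERIV_unique[OF _ bpoly_has_field_derivative_y])
qed

definition jacobian :: "complex poly poly \<Rightarrow> complex poly poly \<Rightarrow> complex poly poly" where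
  "jacobian H1 H2 = pderiv_x H1 * pderiv_y H2 - pderiv_y H1 * pderiv_x H2"

lemma jacobian_const_if_left_inverse:
  assumes "\<And>a b. bpoly K1 (bpoly H1 a b) (bpoly H2 a b) = a"
    and "\<And>a b. bpoly K2 (bpoly H1 a b) (bpoly H2 a b) = b"
  shows "\<exists>J. J \<noteq> 0 \<and> (\<forall>a b. bpoly (jacobian H1 H2) a b = J)"
proof -
  have "bpoly (jacobian H1 H2) a b \<noteq> 0" for a b
  proof -
    define P Q R S where "P = bpoly (pderiv_x K1) (bpoly H1 a b) (bpoly H2 a b)"
      and "Q = bpoly (pderiv_y K1) (bpoly H1 a b) (bpoly H2 a b)"
      and "R = bpoly (pderiv_x K2) (bpoly H1 a b) (bpoly H2 a b)"
      and "S = bpoly (pderiv_y K2) (bpoly H1 a b) (bpoly H2 a b)"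
    define p q r s where "p = bpoly (pderiv_x H1) a b" and "q = bpoly (pderiv_y H1) a b"
      and "r = bpoly (pderiv_x H2) a b" and "s = bpoly (pderiv_y H2) a b"
    have "P * p + Q * r = 1" "R * p + S * r = 0" "P * q + Q * s = 0" "R * q + S * s = 1"
      using bpoly_comp_pderiv_x[of K1 H1 H2 "[:[:0, 1:]:]"] bpoly_comp_pderiv_x[of K2 H1 H2 "[:0, 1:]"]
        bpoly_comp_pderiv_y[of K1 H1 H2 "[:[:0, 1:]:]"] bpoly_comp_pderiv_y[of K2 H1 H2 "[:0, 1:]"] assms
      unfolding P_def Q_def R_def S_def p_def q_def r_def s_def by (simp_all add: pderiv_pCons)
    moreover have "(P * S - Q * R) * (p * s - q * r)
        = (P * p + Q * r) * (R * q + S * s) - (P * q + Q * s) * (R * p + S * r)"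
      by (simp add: algebra_simps)
    ultimately have "(P * S - Q * R) * bpoly (jacobian H1 H2) a b = 1"
      unfolding jacobian_def p_def q_def r_def s_def by simp
    thus ?thesis by auto
  qed
  then obtain J where "\<forall>a b. bpoly (jacobian H1 H2) a b = J"
    using bpoly_nonvanishing_imp_constant by blast
  with \<open>bpoly (jacobian H1 H2) 0 0 \<noteq> 0\<close> show ?thesis by auto
qed

lemma bpoly_semi_invariant_imp_const:
  assumes "F \<noteq> 0"
    and KH: "\<And>a b. bpoly K1 (bpoly H1 a b) (bpoly H2 a b) = a" "\<And>a b. bpoly K2 (bpoly H1 a b) (bpoly H2 a b) = b"
    and HK: "\<And>a b. bpoly H1 (bpoly K1 a b) (bpoly K2 a b) = a" "\<And>a b. bpoly H2 (bpoly K1 a b) (bpoly K2 a b) = b"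
    and A: "\<And>a b. bpoly F (bpoly H1 a b) (bpoly H2 a b) = bpoly F a b * bpoly A a b"
    and B: "\<And>a b. bpoly F (bpoly K1 a b) (bpoly K2 a b) = bpoly F a b * bpoly B a b"
  shows "\<exists>l. l \<noteq> 0 \<and> (\<forall>a b. bpoly A a b = l)"
proof -
  obtain AK where AK: "\<And>a b. bpoly A (bpoly K1 a b) (bpoly K2 a b) = bpoly AK a b"
    using bpoly_comp_eq_bpoly by blast
  have "bpoly F a b = bpoly F a b * bpoly B a b * bpoly AK a b" for a b
  proof -
    have "bpoly F a b = bpoly F (bpoly H1 (bpoly K1 a b) (bpoly K2 a b)) (bpoly H2 (bpoly K1 a b) (bpoly K2 a b))"
      using HK by simp
    also have "\<dots> = bpoly F a b * bpoly B a b * bpoly AK a b"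
      unfolding A B AK ..
    finally show ?thesis .
  qed
  hence "F * (B * AK - 1) = 0" by (intro bpoly_eq_0_imp_eq_0) (simp add: algebra_simps)
  hence "B * AK = 1" using assms(1) by simp
  hence BAK: "bpoly B a b * bpoly AK a b = 1" for a b by (metis bpoly_1 bpoly_mult)
  have A_nonzero: "bpoly A a b \<noteq> 0" for a b
  proof
    assume "bpoly A a b = 0"
    hence "bpoly AK (bpoly H1 a b) (bpoly H2 a b) = 0" using AK[symmetric] KH by simp
    thus False using BAK by (metis mult_zero_right zero_neq_one)
  qed
  then obtain l where "\<forall>a b. bpoly A a b = l" using bpoly_nonvanishing_imp_constant by blast
  with A_nonzero show ?thesis by metis
qed

lemma field_poly_bezout:
  fixes p q :: "'a::field poly"
  assumes "\<And>d. d dvd p \<Longrightarrow> d dvd q \<Longrightarrow> is_unit d"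
  shows "\<exists>u v. u * p + v * q = 1"
  using assms
proof (induct q arbitrary: p rule: measure_induct_rule[of "\<lambda>q. if q = 0 then 0 else Suc (degree q)"])
  case (less q p)
  show ?case
  proof (cases "q = 0")
    case True
    then have "is_unit p" using less.prems[of p] by auto
    then obtain k where "1 = p * k" by (auto elim: dvdE)
    then have "k * p + 0 * q = 1" by (simp add: mult.commute)
    thus ?thesis by blast
  next
    case False
    let ?r = "p mod q"
    have cd: "\<And>d. d dvd q \<Longrightarrow> d dvd ?r \<Longrightarrow> is_unit d"
    proof -
      fix d assume "d dvd q" "d dvd ?r"
      moreover have "p = p div q * q + ?r" by simp
      ultimately have "d dvd p" by (metis dvd_add dvd_mult)
      thus "is_unit d" using less.prems \<open>d dvd q\<close> by blast
    qed
    have lt: "(if ?r = 0 then 0 else Suc (degree ?r)) < (if q = 0 then 0 else Suc (degree q))"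
      using degree_mod_less[OF False, of p] False by auto
    from less.hyps[OF lt cd] obtain u v where uv: "u * q + v * ?r = 1" by blast
    have "v * p + (u - v * (p div q)) * q = u * q + v * (p - p div q * q)"
      by (simp add: algebra_simps)
    also have "p - p div q * q = ?r" by (simp add: minus_div_mult_eq_mod)
    finally have "v * p + (u - v * (p div q)) * q = 1" using uv by simp
    thus ?thesis by blast
  qed
qed

lemma coprime_fract_poly_common_divisor:
  fixes F G :: "complex poly poly"
  assumes "coprime F G" "d dvd fract_poly F" "d dvd fract_poly G"
  shows "is_unit d"
proof (cases "d = 0")
  case True
  then have "F = 0" "G = 0" using assms(2,3) by auto
  then show ?thesis using assms(1) by simp
next
  case False
  obtain c d' where d: "d = smult c (fract_poly d')" "content d' = 1"
    using content_decompose_fract[of d] by blast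
  have "d = [:c:] * fract_poly d'" using d by simp
  hence dv: "fract_poly d' dvd d" by (metis dvd_triv_right)
  have "d' dvd F" using fract_poly_dvdD[OF dvd_trans[OF dv assms(2)] d(2)] .
  moreover have "d' dvd G" using fract_poly_dvdD[OF dvd_trans[OF dv assms(3)] d(2)] .
  ultimately have "is_unit d'" using assms(1) coprime_common_divisor by blast
  hence u1: "is_unit (fract_poly d')" by (rule fract_poly_is_unit)
  have "c \<noteq> 0" using False d by auto
  hence "is_unit [:c:]" by (simp add: is_unit_const_poly_iff dvd_field_iff)
  show ?thesis using u1 \<open>is_unit [:c:]\<close> \<open>d = [:c:] * fract_poly d'\<close> is_unit_mult_iff by metis
qed

text \<open>Bezout's identity in \<open>\<complex>(x)[y]\<close> with the denominators cleared: \<open>d\<close> is a nonzero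
  polynomial in \<open>x\<close> alone.\<close>
lemma coprime_bpoly_bezout:
  fixes F G :: "complex poly poly"
  assumes "coprime F G"
  shows "\<exists>U V d. d \<noteq> 0 \<and> U * F + V * G = [:d:]"
proof -
  obtain u v where uv: "u * fract_poly F + v * fract_poly G = 1"
    using field_poly_bezout[of "fract_poly F" "fract_poly G"] coprime_fract_poly_common_divisor[OF assms] by blast
  obtain cu u' where u: "u = smult cu (fract_poly u')" using content_decompose_fract[of u] by blast
  obtain cv v' where v: "v = smult cv (fract_poly v')" using content_decompose_fract[of v] by blast
  obtain a1 b1 where c1: "cu = Fract a1 b1" "b1 \<noteq> 0" by (cases cu)
  obtain a2 b2 where c2: "cv = Fract a2 b2" "b2 \<noteq> 0" by (cases cv)
  have k: "to_fract (b1 * b2) * cu = to_fract (a1 * b2)" "to_fract (b1 * b2) * cv = to_fract (a2 * b1)"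
    using c1 c2 by (simp_all add: Fract_conv_to_fract field_simps)
  have "fract_poly (smult (a1 * b2) (u' * F) + smult (a2 * b1) (v' * G))
      = smult (to_fract (b1 * b2) * cu) (fract_poly (u' * F)) + smult (to_fract (b1 * b2) * cv) (fract_poly (v' * G))"
    unfolding k by (simp add: fract_poly_add)
  also have "\<dots> = smult (to_fract (b1 * b2)) (u * fract_poly F + v * fract_poly G)"
    unfolding u v by (simp add: smult_add_right fract_poly_mult)
  also have "\<dots> = [:to_fract (b1 * b2):]"
    using uv by simp
  also have "\<dots> = fract_poly [:b1 * b2:]" by (simp add: map_poly_pCons)
  finally have "fract_poly (smult (a1 * b2) (u' * F) + smult (a2 * b1) (v' * G)) = fract_poly [:b1 * b2:]" .
  hence "smult (a1 * b2) u' * F + smult (a2 * b1) v' * G = [:b1 * b2:]"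
    by (simp only: fract_poly_eq_iff) simp
  moreover have "b1 * b2 \<noteq> 0" using c1 c2 by simp
  ultimately show ?thesis by blast
qed

lemma coprime_bpoly_common_zeros_finite:
  fixes F G :: "complex poly poly"
  assumes "coprime F G"
  shows "finite {z. bpoly F (fst z) (snd z) = 0 \<and> bpoly G (fst z) (snd z) = 0}"
proof -
  obtain U V d where d: "d \<noteq> 0" "U * F + V * G = [:d:]" using coprime_bpoly_bezout[OF assms] by blast
  let ?S = "\<Union>x\<in>{x. poly d x = 0}. (\<lambda>y. (x, y)) ` {y. bpoly F x y = 0 \<and> bpoly G x y = 0}"
  have sub: "{z. bpoly F (fst z) (snd z) = 0 \<and> bpoly G (fst z) (snd z) = 0} \<subseteq> ?S"
  proof
    fix z assume z: "z \<in> {z. bpoly F (fst z) (snd z) = 0 \<and> bpoly G (fst z) (snd z) = 0}"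
    have "bpoly (U * F + V * G) (fst z) (snd z) = 0" using z by simp
    hence "poly d (fst z) = 0" using d(2) by (simp add: bpoly_def)
    thus "z \<in> ?S" using z by (cases z) auto
  qed
  have fib: "finite {y. bpoly F x y = 0 \<and> bpoly G x y = 0}" for x
  proof -
    let ?qF = "map_poly (\<lambda>c. poly c x) F" and ?qG = "map_poly (\<lambda>c. poly c x) G"
    show ?thesis
    proof (cases "?qF = 0 \<and> ?qG = 0")
      case True
      have "\<And>n. poly (coeff F n) x = 0" "\<And>n. poly (coeff G n) x = 0"
        using True by (metis coeff_0 coeff_map_poly poly_0)+
      hence "[:[:-x,1:]:] dvd F" "[:[:-x,1:]:] dvd G"
        by (simp_all add: const_poly_dvd_iff poly_eq_0_iff_dvd)
      hence "is_unit [:[:-x,1:]:]" using assms coprime_common_divisor by blast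
      hence False by (simp add: is_unit_const_poly_iff is_unit_poly_iff)
      thus ?thesis ..
    next
      case False
      then obtain q where q: "q \<noteq> 0" "q = ?qF \<or> q = ?qG" by blast
      from poly_roots_finite[OF q(1)] show ?thesis
        by (rule finite_subset[rotated]) (use q(2) in \<open>auto simp: bpoly_eq_poly_map_poly\<close>)
    qed
  qed
  have "finite ?S" using poly_roots_finite[OF d(1)] fib by auto
  thus ?thesis using sub finite_subset by blast
qed

section \<open>Regular functions on \<open>\<Gamma>\<close>\<close>

lemma in_Gamma_iff: "t \<in> Gamma \<longleftrightarrow> t \<noteq> 0 \<and> t \<noteq> 1"
  by (auto simp: Gamma_def)

lemma open_Gamma: "open Gamma"
  unfolding Gamma_def by (intro open_Diff finite_imp_closed) auto

lemma infinite_Gamma: "infinite Gamma"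
  unfolding Gamma_def using infinite_UNIV_char_0[where 'a=complex] by auto

lemma poly_eq_0_on_Gamma_imp_eq_0:
  assumes "\<And>t. t \<in> Gamma \<Longrightarrow> poly p t = 0"
  shows "p = 0"
proof (rule ccontr)
  assume "p \<noteq> 0"
  hence "finite {t. poly p t = 0}" by (rule poly_roots_finite)
  moreover have "Gamma \<subseteq> {t. poly p t = 0}" using assms by blast
  ultimately show False using infinite_Gamma finite_subset by blast
qed

lemma regular_GammaI:
  "(\<And>t. t \<in> Gamma \<Longrightarrow> f t = poly p t / (t ^ a * (t - 1) ^ b)) \<Longrightarrow> regular_Gamma f"
  unfolding regular_Gamma_def by blast

lemma regular_GammaE:
  assumes "regular_Gamma f"
  obtains p a b where "\<And>t. t \<in> Gamma \<Longrightarrow> f t = poly p t / (t ^ a * (t - 1) ^ b)"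
  using assms that unfolding regular_Gamma_def by auto

lemma regular_Gamma_cong: "regular_Gamma f \<Longrightarrow> (\<And>t. t \<in> Gamma \<Longrightarrow> f t = g t) \<Longrightarrow> regular_Gamma g"
  unfolding regular_Gamma_def by metis

lemma regular_Gamma_poly: "regular_Gamma (\<lambda>t. poly p t)"
  by (rule regular_GammaI[of _ p 0 0]) simp

lemma regular_Gamma_const: "regular_Gamma (\<lambda>t. c)"
  using regular_Gamma_poly[of "[:c:]"] by simp

lemma regular_Gamma_add:
  assumes "regular_Gamma f" "regular_Gamma g"
  shows "regular_Gamma (\<lambda>t. f t + g t)"
proof -
  obtain p a b where f: "\<And>t. t \<in> Gamma \<Longrightarrow> f t = poly p t / (t ^ a * (t - 1) ^ b)"
    using assms(1) regular_GammaE by blast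
  obtain q c d where g: "\<And>t. t \<in> Gamma \<Longrightarrow> g t = poly q t / (t ^ c * (t - 1) ^ d)"
    using assms(2) regular_GammaE by blast
  show ?thesis
  proof (rule regular_GammaI[of _ "p * [:0,1:]^c * [:-1,1:]^d + q * [:0,1:]^a * [:-1,1:]^b" "a+c" "b+d"])
    fix t assume t: "t \<in> Gamma"
    hence nz: "t ^ a * (t - 1) ^ b \<noteq> 0" "t ^ c * (t - 1) ^ d \<noteq> 0" by (auto simp: in_Gamma_iff)
    have "f t + g t = (poly p t * (t ^ c * (t - 1) ^ d) + poly q t * (t ^ a * (t - 1) ^ b))
        / ((t ^ a * (t - 1) ^ b) * (t ^ c * (t - 1) ^ d))"
      unfolding f[OF t] g[OF t] by (rule add_frac_eq[OF nz])
    also have "\<dots> = poly (p * [:0,1:]^c * [:-1,1:]^d + q * [:0,1:]^a * [:-1,1:]^b) t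
        / (t ^ (a+c) * (t - 1) ^ (b+d))"
      by (simp add: poly_power power_add mult_ac)
    finally show "f t + g t = poly (p * [:0,1:]^c * [:-1,1:]^d + q * [:0,1:]^a * [:-1,1:]^b) t
        / (t ^ (a+c) * (t - 1) ^ (b+d))" .
  qed
qed

lemma regular_Gamma_mult:
  assumes "regular_Gamma f" "regular_Gamma g"
  shows "regular_Gamma (\<lambda>t. f t * g t)"
proof -
  obtain p a b where f: "\<And>t. t \<in> Gamma \<Longrightarrow> f t = poly p t / (t ^ a * (t - 1) ^ b)"
    using assms(1) regular_GammaE by blast
  obtain q c d where g: "\<And>t. t \<in> Gamma \<Longrightarrow> g t = poly q t / (t ^ c * (t - 1) ^ d)"
    using assms(2) regular_GammaE by blast
  show ?thesis
  proof (rule regular_GammaI[of _ "p * q" "a+c" "b+d"])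
    fix t assume t: "t \<in> Gamma"
    have "f t * g t = (poly p t * poly q t) / ((t ^ a * (t - 1) ^ b) * (t ^ c * (t - 1) ^ d))"
      unfolding f[OF t] g[OF t] by (rule times_divide_times_eq)
    thus "f t * g t = poly (p * q) t / (t ^ (a+c) * (t - 1) ^ (b+d))"
      by (simp add: power_add mult_ac)
  qed
qed

lemma regular_Gamma_bpoly:
  assumes "regular_Gamma a" "regular_Gamma b"
  shows "regular_Gamma (\<lambda>t. bpoly F (a t) (b t))"
proof -
  have "regular_Gamma (\<lambda>t. poly c (a t))" for c
    by (induct c) (simp_all add: regular_Gamma_const regular_Gamma_add[OF regular_Gamma_const
        regular_Gamma_mult[OF assms(1)]])
  thus ?thesis
    by (induct F) (simp_all add: regular_Gamma_const regular_Gamma_add[OF _ regular_Gamma_mult[OF assms(2)]])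
qed

lemma regular_Gamma_mult_eq_0:
  assumes "regular_Gamma f" "regular_Gamma g" "\<And>t. t \<in> Gamma \<Longrightarrow> f t * g t = 0"
  shows "(\<forall>t\<in>Gamma. f t = 0) \<or> (\<forall>t\<in>Gamma. g t = 0)"
proof -
  obtain p a b where f: "\<And>t. t \<in> Gamma \<Longrightarrow> f t = poly p t / (t ^ a * (t - 1) ^ b)"
    using assms(1) regular_GammaE by blast
  obtain q c d where g: "\<And>t. t \<in> Gamma \<Longrightarrow> g t = poly q t / (t ^ c * (t - 1) ^ d)"
    using assms(2) regular_GammaE by blast
  have "poly (p * q) t = 0" if t: "t \<in> Gamma" for t
    using assms(3)[OF t] f[OF t] g[OF t] t by (auto simp: in_Gamma_iff)
  hence "p * q = 0" by (rule poly_eq_0_on_Gamma_imp_eq_0)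
  hence "p = 0 \<or> q = 0" by simp
  thus ?thesis using f g by auto
qed

lemma regular_Gamma_has_regular_derivative:
  assumes "regular_Gamma f"
  obtains f' where "regular_Gamma f'" "\<And>t. t \<in> Gamma \<Longrightarrow> (f has_field_derivative f' t) (at t)"
proof -
  obtain p a b where f: "\<And>t. t \<in> Gamma \<Longrightarrow> f t = poly p t / (t ^ a * (t - 1) ^ b)"
    using assms regular_GammaE by blast
  define q :: "complex poly" where "q = [:0,1:]^a * [:-1,1:]^b"
  have q: "poly q t = t ^ a * (t - 1) ^ b" for t by (simp add: q_def poly_power)
  define f' where "f' t = poly (pderiv p * q - p * pderiv q) t / (t ^ (2 * a) * (t - 1) ^ (2 * b))" for t
  have "regular_Gamma f'" unfolding f'_def by (rule regular_GammaI) (rule refl)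
  moreover have "(f has_field_derivative f' t) (at t)" if t: "t \<in> Gamma" for t
  proof -
    have "poly q t \<noteq> 0" using t by (auto simp: q in_Gamma_iff)
    hence "((\<lambda>s. poly p s / poly q s) has_field_derivative f' t) (at t)"
      using DERIV_divide[OF poly_DERIV[of p t] poly_DERIV[of q t]]
      by (simp add: f'_def q power_mult power_mult_distrib algebra_simps power2_eq_square)
    thus ?thesis
      by (rule has_field_derivative_transform_within_open[OF _ open_Gamma t]) (simp add: f q)
  qed
  ultimately show ?thesis using that by blast
qed

lemma has_field_derivative_unique_on_Gamma:
  assumes "t \<in> Gamma" "(f has_field_derivative D) (at t)" "(g has_field_derivative E) (at t)"
    and "\<And>s. s \<in> Gamma \<Longrightarrow> f s = g s"
  shows "D = E"
  using DERIV_unique[OF has_field_derivative_transform_within_open[OF assms(2) open_Gamma assms(1)] assms(3)]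
    assms(4) by blast

lemma poly_roots_01_imp_monomials:
  fixes p :: "complex poly"
  assumes "p \<noteq> 0" "\<And>z. poly p z = 0 \<Longrightarrow> z = 0 \<or> z = 1"
  shows "\<exists>c i j. c \<noteq> 0 \<and> (\<forall>t. poly p t = c * t ^ i * (t - 1) ^ j)"
  using assms
proof (induct "degree p" arbitrary: p rule: less_induct)
  case less
  show ?case
  proof (cases "degree p = 0")
    case True
    then obtain c where "p = [:c:]" by (metis degree_eq_zeroE)
    thus ?thesis using less.prems(1) by (intro exI[of _ c] exI[of _ 0]) auto
  next
    case False
    hence "\<not> constant (poly p)" by (simp add: constant_degree)
    then obtain z where z: "poly p z = 0" using fundamental_theorem_of_algebra by blast
    then obtain q where q: "p = [:-z,1:] * q" using poly_eq_0_iff_dvd by (metis dvdE)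
    have q0: "q \<noteq> 0" using q less.prems(1) by auto
    have "degree p = degree [:-z,1::complex:] + degree q" using q q0 by (metis degree_mult_eq pCons_eq_0_iff one_neq_zero)
    hence dq: "degree q < degree p" by simp
    have "\<And>w. poly q w = 0 \<Longrightarrow> w = 0 \<or> w = 1" using q less.prems(2) by (metis mult_zero_right poly_mult)
    from less.hyps[OF dq q0 this] obtain c i j where cij: "c \<noteq> 0" "\<forall>t. poly q t = c * t ^ i * (t - 1) ^ j" by blast
    have pt: "\<forall>t. poly p t = (t - z) * (c * t ^ i * (t - 1) ^ j)"
    proof
      fix t have "poly p t = poly [:-z,1:] t * poly q t" unfolding q by (rule poly_mult)
      thus "poly p t = (t - z) * (c * t ^ i * (t - 1) ^ j)" using cij by simp
    qed
    have "z = 0 \<or> z = 1" using less.prems(2) z by blast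
    thus ?thesis
    proof
      assume "z = 0"
      thus ?thesis using cij pt by (intro exI[of _ c] exI[of _ "Suc i"] exI[of _ j]) (auto simp: algebra_simps)
    next
      assume "z = 1"
      thus ?thesis using cij pt by (intro exI[of _ c] exI[of _ i] exI[of _ "Suc j"]) (auto simp: algebra_simps)
    qed
  qed
qed

lemma regular_Gamma_partition_of_unity:
  assumes "regular_Gamma f1" "regular_Gamma f2" "\<And>t. t \<in> Gamma \<Longrightarrow> f1 t \<noteq> 0 \<or> f2 t \<noteq> 0"
  shows "\<exists>u1 u2. regular_Gamma u1 \<and> regular_Gamma u2 \<and> (\<forall>t\<in>Gamma. u1 t * f1 t + u2 t * f2 t = 1)"
proof -
  obtain p1 a1 b1 where f1: "\<And>t. t \<in> Gamma \<Longrightarrow> f1 t = poly p1 t / (t ^ a1 * (t - 1) ^ b1)"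
    using assms(1) regular_GammaE by blast
  obtain p2 a2 b2 where f2: "\<And>t. t \<in> Gamma \<Longrightarrow> f2 t = poly p2 t / (t ^ a2 * (t - 1) ^ b2)"
    using assms(2) regular_GammaE by blast
  define g where "g = gcd p1 p2"
  obtain s r where sr: "s * p1 + r * p2 = g"
    using bezout_coefficients_fst_snd unfolding g_def by blast
  have roots: "z = 0 \<or> z = 1" if "poly g z = 0" for z
  proof (rule ccontr)
    assume "\<not> (z = 0 \<or> z = 1)"
    hence z: "z \<in> Gamma" by (simp add: in_Gamma_iff)
    have "poly p1 z = 0" "poly p2 z = 0"
      using \<open>poly g z = 0\<close> unfolding g_def by (metis dvd_def gcd_dvd1 gcd_dvd2 mult_zero_left poly_mult)+
    thus False using assms(3)[OF z] f1[OF z] f2[OF z] by simp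
  qed
  have "g \<noteq> 0" using roots[of 2] by auto
  from poly_roots_01_imp_monomials[OF this roots] obtain c i j
    where c: "c \<noteq> 0" "\<forall>t. poly g t = c * t ^ i * (t - 1) ^ j" by blast
  define u1 where "u1 t = poly s t * t ^ a1 * (t - 1) ^ b1 / (c * t ^ i * (t - 1) ^ j)" for t
  define u2 where "u2 t = poly r t * t ^ a2 * (t - 1) ^ b2 / (c * t ^ i * (t - 1) ^ j)" for t
  have "regular_Gamma u1"
    by (rule regular_GammaI[of _ "smult (1/c) (s * [:0,1:]^a1 * [:-1,1:]^b1)" i j]) (simp add: u1_def poly_power)
  moreover have "regular_Gamma u2"
    by (rule regular_GammaI[of _ "smult (1/c) (r * [:0,1:]^a2 * [:-1,1:]^b2)" i j]) (simp add: u2_def poly_power)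
  moreover have "u1 t * f1 t + u2 t * f2 t = 1" if t: "t \<in> Gamma" for t
  proof -
    have "poly p1 t * poly s t + poly p2 t * poly r t = c * (t ^ i * (t - 1) ^ j)"
      using arg_cong[OF sr, of "\<lambda>p. poly p t"] c(2) by (simp add: algebra_simps)
    moreover have "t \<noteq> 0" "t - 1 \<noteq> 0" using t by (auto simp: in_Gamma_iff)
    ultimately show ?thesis
      using c(1) unfolding u1_def u2_def f1[OF t] f2[OF t] by (simp add: field_simps)
  qed
  ultimately show ?thesis by blast
qed

lemma regular_Gamma_unit_form:
  assumes "regular_Gamma f" "regular_Gamma h" "\<And>t. t \<in> Gamma \<Longrightarrow> f t * h t = 1"
  shows "\<exists>c i j a b. c \<noteq> 0 \<and> (\<forall>t\<in>Gamma. f t = c * t ^ i * (t - 1) ^ j / (t ^ a * (t - 1) ^ b))"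
proof -
  obtain p a b where f: "\<forall>t\<in>Gamma. f t = poly p t / (t ^ a * (t - 1) ^ b)"
    using assms(1) unfolding regular_Gamma_def by blast
  obtain q c d where h: "\<forall>t\<in>Gamma. h t = poly q t / (t ^ c * (t - 1) ^ d)"
    using assms(2) unfolding regular_Gamma_def by blast
  let ?m = "[:0,1:]^(a+c) * [:-1,1:]^(b+d) :: complex poly"
  have "poly (p * q - ?m) t = 0" if t: "t \<in> Gamma" for t
  proof -
    have "t \<noteq> 0" "t - 1 \<noteq> 0" using t by (auto simp: in_Gamma_iff)
    hence "poly p t * poly q t = t ^ (a + c) * (t - 1) ^ (b + d)"
      using assms(3)[OF t] f h t by (simp add: field_simps power_add)
    thus ?thesis by (simp add: poly_power)
  qed
  hence "p * q - ?m = 0" by (rule poly_eq_0_on_Gamma_imp_eq_0)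
  hence pq: "p * q = ?m" by simp
  have p0: "p \<noteq> 0" using pq by auto
  have "\<And>z. poly p z = 0 \<Longrightarrow> z = 0 \<or> z = 1"
  proof -
    fix z assume "poly p z = 0"
    hence "poly ?m z = 0" by (metis pq mult_zero_left poly_mult)
    thus "z = 0 \<or> z = 1" by (auto simp: poly_power)
  qed
  from poly_roots_01_imp_monomials[OF p0 this] obtain k i j
    where "k \<noteq> 0" "\<forall>t. poly p t = k * t ^ i * (t - 1) ^ j" by blast
  thus ?thesis using f by metis
qed

lemma regular_Gamma_divided_difference:
  assumes "regular_Gamma f" "t0 \<in> Gamma"
  shows "\<exists>b. regular_Gamma b \<and> (\<forall>t\<in>Gamma. f t - f t0 = (t - t0) * b t)"
proof -
  obtain p a b where f: "\<forall>t\<in>Gamma. f t = poly p t / (t ^ a * (t - 1) ^ b)"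
    using assms(1) unfolding regular_Gamma_def by blast
  have t0: "t0 \<noteq> 0" "t0 - 1 \<noteq> 0" using assms(2) by (auto simp: in_Gamma_iff)
  define K where "K = t0 ^ a * (t0 - 1) ^ b"
  have K0: "K \<noteq> 0" using t0 unfolding K_def by simp
  define N where "N = smult K p - smult (poly p t0) ([:0,1:]^a * [:-1,1:]^b)"
  have "poly N t0 = 0" unfolding N_def K_def by (simp add: poly_power)
  then obtain N1 where N1: "N = [:-t0,1:] * N1" using poly_eq_0_iff_dvd by (metis dvdE)
  define bb where "bb t = poly (smult (1/K) N1) t / (t ^ a * (t - 1) ^ b)" for t
  have "regular_Gamma bb" unfolding bb_def by (rule regular_GammaI[of _ "smult (1/K) N1" a b]) simp
  moreover have "\<forall>t\<in>Gamma. f t - f t0 = (t - t0) * bb t"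
  proof
    fix t assume t: "t \<in> Gamma"
    hence nz: "t \<noteq> 0" "t - 1 \<noteq> 0" by (auto simp: in_Gamma_iff)
    have "poly N t = (t - t0) * poly N1 t" unfolding N1 by (simp add: algebra_simps)
    hence e: "K * poly p t - poly p t0 * (t ^ a * (t - 1) ^ b) = (t - t0) * poly N1 t"
      unfolding N_def by (simp add: poly_power)
    have "f t - f t0 = (K * poly p t - poly p t0 * (t ^ a * (t - 1) ^ b)) / (K * (t ^ a * (t - 1) ^ b))"
      using f t assms(2) nz K0 unfolding K_def by (simp add: field_simps)
    also have "\<dots> = (t - t0) * bb t" unfolding e bb_def using K0 nz by (simp add: field_simps)
    finally show "f t - f t0 = (t - t0) * bb t" .
  qed
  ultimately show ?thesis by blast
qed

lemma regular_Gamma_proportional_imp_unit: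
  assumes "regular_Gamma u1" "regular_Gamma u2" "regular_Gamma v1" "regular_Gamma v2"
    and "\<And>t. t \<in> Gamma \<Longrightarrow> u1 t \<noteq> 0 \<or> u2 t \<noteq> 0"
    and "\<And>t. t \<in> Gamma \<Longrightarrow> v1 t \<noteq> 0 \<or> v2 t \<noteq> 0"
    and v: "\<And>t. t \<in> Gamma \<Longrightarrow> v1 t = \<alpha> t * u1 t \<and> v2 t = \<alpha> t * u2 t"
  shows "\<exists>c i j a b. c \<noteq> 0 \<and> (\<forall>t\<in>Gamma. \<alpha> t = c * t ^ i * (t - 1) ^ j / (t ^ a * (t - 1) ^ b))"
proof -
  obtain w1 w2 where w: "regular_Gamma w1" "regular_Gamma w2" "\<forall>t\<in>Gamma. w1 t * u1 t + w2 t * u2 t = 1"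
    using regular_Gamma_partition_of_unity[OF assms(1,2,5)] by blast
  obtain z1 z2 where z: "regular_Gamma z1" "regular_Gamma z2" "\<forall>t\<in>Gamma. z1 t * v1 t + z2 t * v2 t = 1"
    using regular_Gamma_partition_of_unity[OF assms(3,4,6)] by blast
  have "w1 t * v1 t + w2 t * v2 t = \<alpha> t * (w1 t * u1 t + w2 t * u2 t)" if "t \<in> Gamma" for t
    using v[OF that] by (simp add: algebra_simps)
  hence "w1 t * v1 t + w2 t * v2 t = \<alpha> t" if "t \<in> Gamma" for t
    using w(3) that by simp
  moreover have "regular_Gamma (\<lambda>t. w1 t * v1 t + w2 t * v2 t)"
    by (intro regular_Gamma_add regular_Gamma_mult w(1,2) assms(3,4))
  ultimately have "regular_Gamma \<alpha>" using regular_Gamma_cong by blast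
  moreover have "regular_Gamma (\<lambda>t. z1 t * u1 t + z2 t * u2 t)"
    by (intro regular_Gamma_add regular_Gamma_mult z assms(1,2))
  moreover have "\<alpha> t * (z1 t * u1 t + z2 t * u2 t) = z1 t * v1 t + z2 t * v2 t" if "t \<in> Gamma" for t
    using v[OF that] by (simp add: algebra_simps)
  hence "\<alpha> t * (z1 t * u1 t + z2 t * u2 t) = 1" if "t \<in> Gamma" for t
    using z(3) that by simp
  ultimately show ?thesis by (rule regular_Gamma_unit_form)
qed

section \<open>The automorphism \<open>t \<mapsto> 1 / (1 - t)\<close> of \<open>\<Gamma>\<close>\<close>

definition gamma_rot :: "complex \<Rightarrow> complex" where
  "gamma_rot t = 1 / (1 - t)"

lemma gamma_rot_in_Gamma: "t \<in> Gamma \<Longrightarrow> gamma_rot t \<in> Gamma"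
  by (auto simp: gamma_rot_def in_Gamma_iff)

lemma gamma_rot_inverse: "t \<in> Gamma \<Longrightarrow> 1 - 1 / t \<in> Gamma \<and> gamma_rot (1 - 1 / t) = t"
  by (auto simp: gamma_rot_def in_Gamma_iff field_simps)

lemma gamma_rot_has_field_derivative:
  "t \<in> Gamma \<Longrightarrow> (gamma_rot has_field_derivative 1 / (1 - t)\<^sup>2) (at t)"
  unfolding gamma_rot_def in_Gamma_iff
  by (auto intro!: derivative_eq_intros simp: power2_eq_square field_simps)

lemma gamma_rot_in_Aut_Gamma: "gamma_rot \<in> Aut_Gamma"
proof -
  have "morphism_Gamma gamma_rot"
    unfolding morphism_Gamma_def
    by (auto simp: gamma_rot_in_Gamma gamma_rot_def in_Gamma_iff field_simps
        intro!: regular_GammaI[of _ "[:-1:]" 0 1])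
  moreover have "morphism_Gamma (\<lambda>t. 1 - 1 / t)"
    unfolding morphism_Gamma_def
    by (auto simp: gamma_rot_inverse in_Gamma_iff field_simps
        intro!: regular_GammaI[of _ "[:-1, 1:]" 1 0])
  moreover have "1 - 1 / gamma_rot t = t" if "t \<in> Gamma" for t
    using that by (auto simp: gamma_rot_def in_Gamma_iff field_simps)
  ultimately show ?thesis
    unfolding Aut_Gamma_def using gamma_rot_inverse by blast
qed

text \<open>In terms of the 1-form \<open>\<omega> = dt / \<alpha>\<close>, the hypothesis on \<open>\<alpha>\<close> says
  \<open>gamma_rot\<^sup>* \<omega> = (J / l) \<omega>\<close>; its values at \<open>2\<close> and \<open>-1\<close> (with \<open>gamma_rot 2 = -1\<close>,
  \<open>gamma_rot (-1) = 1/2\<close>) already force \<open>3 (j - b) = 2\<close>.\<close>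
lemma unit_not_gamma_rot_eigenform:
  assumes "c \<noteq> 0" "l \<noteq> 0" "J \<noteq> 0"
    and \<alpha>: "\<And>t. t \<in> Gamma \<Longrightarrow> \<alpha> t = c * t ^ i * (t - 1) ^ j / (t ^ a * (t - 1) ^ b)"
    and eigen: "\<And>t. t \<in> Gamma \<Longrightarrow> l * \<alpha> t / (1 - t)\<^sup>2 = J * \<alpha> (gamma_rot t)"
  shows False
proof -
  define L M k where "L = norm l" and "M = norm J" and "k = norm c"
  have pos: "L > 0" "M > 0" "k > 0" using assms(1-3) by (auto simp: L_def M_def k_def)
  have in_Gamma: "(2::complex) \<in> Gamma" "(-1::complex) \<in> Gamma" "(1/2::complex) \<in> Gamma"
    by (auto simp: in_Gamma_iff)
  have rot: "gamma_rot 2 = -1" "gamma_rot (-1) = 1/2" by (simp_all add: gamma_rot_def)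
  have "L * (k * 2^i / 2^a) = M * (k * 2^j / 2^b)"
    using arg_cong[OF eigen[OF in_Gamma(1)], of norm]
    unfolding rot \<alpha>[OF in_Gamma(1)] \<alpha>[OF in_Gamma(2)]
    by (simp add: L_def M_def k_def norm_mult norm_divide norm_power)
  hence e1: "L * 2^i * 2^b = M * 2^j * 2^a" using pos by (simp add: field_simps)
  have "L / 4 * (k * 2^j / 2^b) = M * (k * (1/2)^i * (1/2)^j / ((1/2)^a * (1/2)^b))"
    using arg_cong[OF eigen[OF in_Gamma(2)], of norm]
    unfolding rot \<alpha>[OF in_Gamma(2)] \<alpha>[OF in_Gamma(3)]
    by (simp add: L_def M_def k_def norm_mult norm_divide norm_power)
  hence e2: "L * 2^j * 2^i * 2^j = 4 * M * 2^a * 2^b * 2^b"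
    using pos by (simp add: field_simps power_one_over)
  have "M * 2^a * (2^j * 2^j * 2^j) = (L * 2^i * 2^b) * 2^j * 2^j"
    using e1 by (simp add: algebra_simps)
  also have "\<dots> = (L * 2^j * 2^i * 2^j) * 2^b" by (simp add: algebra_simps)
  also have "\<dots> = M * 2^a * (4 * 2^b * 2^b * 2^b)" using e2 by (simp add: algebra_simps)
  finally have "(2::real) ^ (3 * j) = 2 ^ (3 * b + 2)"
    using pos by (simp add: power_add power_mult_distrib numeral_3_eq_3 power2_eq_square)
  hence "3 * j = 3 * b + 2" by (subst (asm) power_inject_exp) simp_all
  thus False by presburger
qed

section \<open>Closed embeddings of \<open>\<Gamma>\<close> in the plane\<close>

locale Gamma_embedding =
  fixes x y :: "complex \<Rightarrow> complex" and P Q R :: "complex poly poly"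
  assumes regular_x: "regular_Gamma x" and regular_y: "regular_Gamma y"
    and P: "\<And>t. t \<in> Gamma \<Longrightarrow> bpoly P (x t) (y t) = t"
    and Q: "\<And>t. t \<in> Gamma \<Longrightarrow> bpoly Q (x t) (y t) = 1 / t"
    and R: "\<And>t. t \<in> Gamma \<Longrightarrow> bpoly R (x t) (y t) = 1 / (t - 1)"
begin

definition vanishes_on_curve :: "complex poly poly \<Rightarrow> bool" where
  "vanishes_on_curve A \<longleftrightarrow> (\<forall>t\<in>Gamma. bpoly A (x t) (y t) = 0)"

lemma vanishes_on_curve_dvd: "vanishes_on_curve A \<Longrightarrow> A dvd B \<Longrightarrow> vanishes_on_curve B"
  unfolding vanishes_on_curve_def by (auto elim!: dvdE)

lemma vanishes_on_curve_mult:
  "vanishes_on_curve (A * B) \<Longrightarrow> vanishes_on_curve A \<or> vanishes_on_curve B"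
  using regular_Gamma_mult_eq_0[OF regular_Gamma_bpoly[OF regular_x regular_y, of A]
      regular_Gamma_bpoly[OF regular_x regular_y, of B]]
  unfolding vanishes_on_curve_def by auto

lemma vanishes_on_curve_prod_mset: "vanishes_on_curve (prod_mset M) \<Longrightarrow> \<exists>p\<in>#M. vanishes_on_curve p"
proof (induct M)
  case empty
  have "(2::complex) \<in> Gamma" by (simp add: in_Gamma_iff)
  with empty show ?case unfolding vanishes_on_curve_def by auto
next
  case (add p M)
  then show ?case using vanishes_on_curve_mult[of p "prod_mset M"] by auto
qed

lemma regular_Gamma_eq_bpoly_on_curve:
  assumes "regular_Gamma f"
  shows "\<exists>B. \<forall>t\<in>Gamma. bpoly B (x t) (y t) = f t"
proof -
  obtain p i j where f: "\<And>t. t \<in> Gamma \<Longrightarrow> f t = poly p t / (t ^ i * (t - 1) ^ j)"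
    using assms regular_GammaE by blast
  have "bpoly_fun (\<lambda>u v. poly p (bpoly P u v) * bpoly Q u v ^ i * bpoly R u v ^ j)"
    by (intro bpoly_fun_mult bpoly_fun_poly_comp bpoly_fun_power bpoly_fun_bpoly)
  then obtain B where B: "\<And>u v. poly p (bpoly P u v) * bpoly Q u v ^ i * bpoly R u v ^ j = bpoly B u v"
    unfolding bpoly_fun_def by metis
  have "bpoly B (x t) (y t) = f t" if "t \<in> Gamma" for t
    unfolding B[symmetric] P[OF that] Q[OF that] R[OF that] f[OF that]
    by (simp add: power_one_over field_simps)
  thus ?thesis by blast
qed

lemma infinite_curve: "infinite ((\<lambda>t. (x t, y t)) ` Gamma)"
proof
  assume "finite ((\<lambda>t. (x t, y t)) ` Gamma)"
  moreover have "inj_on (\<lambda>t. (x t, y t)) Gamma"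
    by (rule inj_onI) (metis P prod.inject)
  ultimately show False using infinite_Gamma finite_imageD by blast
qed

definition generates_curve_ideal :: "complex poly poly \<Rightarrow> bool" where
  "generates_curve_ideal F \<longleftrightarrow> vanishes_on_curve F \<and> (\<forall>G. vanishes_on_curve G \<longrightarrow> F dvd G)"

lemma curve_ideal_nonzero: "vanishes_on_curve (P * Q - 1)" "P * Q - 1 \<noteq> 0"
proof -
  show "vanishes_on_curve (P * Q - 1)"
    unfolding vanishes_on_curve_def using P Q by (auto simp: in_Gamma_iff)
  show "P * Q - 1 \<noteq> 0"
  proof
    assume "P * Q - 1 = 0"
    hence "is_unit P" by (metis dvd_triv_left eq_iff_diff_eq_0)
    then obtain c where "P = [:[:c:]:]" by (auto simp: is_unit_poly_iff)
    hence "bpoly P (x 2) (y 2) = bpoly P (x 3) (y 3)" by simp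
    moreover have "(2::complex) \<in> Gamma" "(3::complex) \<in> Gamma" by (auto simp: in_Gamma_iff)
    ultimately show False using P by simp
  qed
qed

text \<open>The ideal of the curve is principal: it contains a prime factor \<open>F\<close> of \<open>P Q - 1\<close>, and any
  \<open>G\<close> in the ideal not divisible by \<open>F\<close> would be coprime to \<open>F\<close>, hence share only finitely
  many zeros with it.\<close>
lemma generates_curve_ideal_exists: "\<exists>F. F \<noteq> 0 \<and> generates_curve_ideal F"
proof -
  obtain A where A: "\<And>p. p \<in># A \<Longrightarrow> prime p" "normalize (prod_mset A) = normalize (P * Q - 1)"
    using prime_factorization_exists'[OF curve_ideal_nonzero(2)] by blast
  have "P * Q - 1 dvd prod_mset A" by (metis A(2) dvd_normalize_iff dvd_refl)
  then obtain F where F: "F \<in># A" "vanishes_on_curve F"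
    using vanishes_on_curve_prod_mset vanishes_on_curve_dvd curve_ideal_nonzero(1) by blast
  have prime: "prime_elem F" using A(1)[OF F(1)] by (simp add: prime_def)
  have "F dvd G" if G: "vanishes_on_curve G" for G
  proof (rule ccontr)
    assume "\<not> F dvd G"
    hence "finite {z. bpoly F (fst z) (snd z) = 0 \<and> bpoly G (fst z) (snd z) = 0}"
      by (intro coprime_bpoly_common_zeros_finite prime_elem_imp_coprime prime)
    moreover have "(\<lambda>t. (x t, y t)) ` Gamma \<subseteq> {z. bpoly F (fst z) (snd z) = 0 \<and> bpoly G (fst z) (snd z) = 0}"
      using F(2) G unfolding vanishes_on_curve_def by auto
    ultimately show False using infinite_curve finite_subset by blast
  qed
  moreover have "F \<noteq> 0" using prime by auto
  ultimately show ?thesis using F(2) unfolding generates_curve_ideal_def by blast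
qed

text \<open>On the curve, \<open>x - x t\<^sub>0\<close> and \<open>y - y t\<^sub>0\<close> are multiples of \<open>t - t\<^sub>0 = P - t\<^sub>0\<close>.
  This gives polynomials \<open>D\<^sub>1, D\<^sub>2\<close> in the ideal of the curve whose gradients at \<open>\<tau> t\<^sub>0\<close> are
  \<open>e\<^sub>1 - B\<^sub>1 \<nabla>P\<close> and \<open>e\<^sub>2 - B\<^sub>2 \<nabla>P\<close>; these cannot both vanish, while a singular point of the
  generator \<open>F\<close> would be a singular point of every element of the ideal.\<close>
lemma generates_curve_ideal_gradient_nonzero:
  assumes F: "generates_curve_ideal F" and t0: "t0 \<in> Gamma"
  shows "bpoly (pderiv_x F) (x t0) (y t0) \<noteq> 0 \<or> bpoly (pderiv_y F) (x t0) (y t0) \<noteq> 0"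
proof (rule ccontr)
  define x0 y0 where "x0 = x t0" and "y0 = y t0"
  assume "\<not> ?thesis"
  hence "bpoly (pderiv_x F) x0 y0 = 0" "bpoly (pderiv_y F) x0 y0 = 0"
    by (auto simp: x0_def y0_def)
  moreover have "bpoly F x0 y0 = 0"
    using F t0 unfolding generates_curve_ideal_def vanishes_on_curve_def x0_def y0_def by blast
  ultimately have singular: "bpoly (pderiv_x G) x0 y0 = 0 \<and> bpoly (pderiv_y G) x0 y0 = 0"
    if "vanishes_on_curve G" for G
    using F that unfolding generates_curve_ideal_def
    by (auto elim!: dvdE simp: bpoly_pderiv_x_mult bpoly_pderiv_y_mult)
  have P0: "bpoly P x0 y0 = t0" using P[OF t0] by (simp add: x0_def y0_def)
  obtain b1 where b1: "regular_Gamma b1" "\<forall>t\<in>Gamma. x t - x t0 = (t - t0) * b1 t"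
    using regular_Gamma_divided_difference[OF regular_x t0] by blast
  obtain b2 where b2: "regular_Gamma b2" "\<forall>t\<in>Gamma. y t - y t0 = (t - t0) * b2 t"
    using regular_Gamma_divided_difference[OF regular_y t0] by blast
  obtain B1 where B1: "\<forall>t\<in>Gamma. bpoly B1 (x t) (y t) = b1 t"
    using regular_Gamma_eq_bpoly_on_curve[OF b1(1)] by blast
  obtain B2 where B2: "\<forall>t\<in>Gamma. bpoly B2 (x t) (y t) = b2 t"
    using regular_Gamma_eq_bpoly_on_curve[OF b2(1)] by blast
  define D1 where "D1 = [:[:0, 1:]:] - [:[:x0:]:] - (P - [:[:t0:]:]) * B1"
  define D2 where "D2 = [:0, 1:] - [:[:y0:]:] - (P - [:[:t0:]:]) * B2"
  have "vanishes_on_curve D1" "vanishes_on_curve D2"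
    unfolding vanishes_on_curve_def D1_def D2_def using P B1 b1 B2 b2 by (simp_all add: x0_def y0_def)
  hence "bpoly (pderiv_x D1) x0 y0 = 0" "bpoly (pderiv_y D1) x0 y0 = 0"
    "bpoly (pderiv_x D2) x0 y0 = 0" "bpoly (pderiv_y D2) x0 y0 = 0"
    using singular by blast+
  hence "bpoly (pderiv_x P) x0 y0 * bpoly B1 x0 y0 = 1" "bpoly (pderiv_y P) x0 y0 * bpoly B1 x0 y0 = 0"
    "bpoly (pderiv_x P) x0 y0 * bpoly B2 x0 y0 = 0" "bpoly (pderiv_y P) x0 y0 * bpoly B2 x0 y0 = 1"
    unfolding D1_def D2_def by (simp_all add: bpoly_pderiv_x_mult bpoly_pderiv_y_mult P0 pderiv_pCons)
  thus False by auto
qed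

lemma tangent_nonzero:
  assumes "t \<in> Gamma" "(x has_field_derivative x') (at t)" "(y has_field_derivative y') (at t)"
  shows "x' \<noteq> 0 \<or> y' \<noteq> 0"
proof -
  have "bpoly (pderiv_x P) (x t) (y t) * x' + bpoly (pderiv_y P) (x t) (y t) * y' = 1"
    using has_field_derivative_unique_on_Gamma[OF assms(1) bpoly_has_field_derivative[OF assms(2,3)] DERIV_ident] P
    by blast
  thus ?thesis by auto
qed

lemma vanishes_on_curve_gradient_orthogonal:
  assumes "vanishes_on_curve G"
    and "t \<in> Gamma" "(x has_field_derivative x') (at t)" "(y has_field_derivative y') (at t)"
  shows "bpoly (pderiv_x G) (x t) (y t) * x' + bpoly (pderiv_y G) (x t) (y t) * y' = 0"
  using has_field_derivative_unique_on_Gamma[OF assms(2) bpoly_has_field_derivative[OF assms(3,4)] DERIV_const]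
    assms(1) unfolding vanishes_on_curve_def by blast

text \<open>Here \<open>dt / \<alpha>\<close> is the residue of \<open>dx \<and> dy / F\<close> along the curve; \<open>\<alpha>\<close> is a unit
  because neither the gradient of \<open>F\<close> nor the tangent vector vanishes.\<close>
lemma generates_curve_ideal_gradient_eq_unit_mult:
  assumes F: "generates_curve_ideal F"
    and x': "regular_Gamma x'" "\<And>t. t \<in> Gamma \<Longrightarrow> (x has_field_derivative x' t) (at t)"
    and y': "regular_Gamma y'" "\<And>t. t \<in> Gamma \<Longrightarrow> (y has_field_derivative y' t) (at t)"
  shows "\<exists>\<alpha> c i j a b. c \<noteq> 0 \<and> (\<forall>t\<in>Gamma. \<alpha> t = c * t ^ i * (t - 1) ^ j / (t ^ a * (t - 1) ^ b))
    \<and> (\<forall>t\<in>Gamma. bpoly (pderiv_y F) (x t) (y t) = \<alpha> t * x' t \<and> - bpoly (pderiv_x F) (x t) (y t) = \<alpha> t * y' t)"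
proof -
  define fx fy where "fx t = bpoly (pderiv_x F) (x t) (y t)" and "fy t = bpoly (pderiv_y F) (x t) (y t)" for t
  have tangent: "x' t \<noteq> 0 \<or> y' t \<noteq> 0" if "t \<in> Gamma" for t
    using tangent_nonzero[OF that x'(2)[OF that] y'(2)[OF that]] .
  define \<alpha> where "\<alpha> t = (if x' t \<noteq> 0 then fy t / x' t else - fx t / y' t)" for t
  have \<alpha>: "fy t = \<alpha> t * x' t \<and> - fx t = \<alpha> t * y' t" if t: "t \<in> Gamma" for t
  proof -
    have "fx t * x' t + fy t * y' t = 0"
      using vanishes_on_curve_gradient_orthogonal[OF _ t x'(2)[OF t] y'(2)[OF t]] F t
      unfolding generates_curve_ideal_def fx_def fy_def by blast
    hence "- (fx t * x' t) = fy t * y' t" by (simp add: neg_eq_iff_add_eq_0)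
    thus ?thesis using tangent[OF t] unfolding \<alpha>_def by (auto simp: field_simps)
  qed
  have "\<exists>c i j a b. c \<noteq> 0 \<and> (\<forall>t\<in>Gamma. \<alpha> t = c * t ^ i * (t - 1) ^ j / (t ^ a * (t - 1) ^ b))"
  proof (rule regular_Gamma_proportional_imp_unit[OF x'(1) y'(1) _ _ tangent _ \<alpha>])
    show "regular_Gamma fy" "regular_Gamma (\<lambda>t. - fx t)"
      unfolding fx_def fy_def using regular_Gamma_bpoly[OF regular_x regular_y] by (simp_all flip: bpoly_minus)
    show "fy t \<noteq> 0 \<or> - fx t \<noteq> 0" if "t \<in> Gamma" for t
      using generates_curve_ideal_gradient_nonzero[OF F that] unfolding fx_def fy_def by auto
  qed
  thus ?thesis using \<alpha> unfolding fx_def fy_def by blast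
qed

end

section \<open>An automorphism of \<open>\<Gamma>\<close> that does not extend\<close>

text \<open>The gradient \<open>(F\<^sub>X, F\<^sub>Y)\<close> of \<open>F\<close> at \<open>h(p)\<close>, multiplied by the Jacobian matrix
  \<open>(A, B; C, D)\<close> of \<open>h\<close> at \<open>p\<close>, is \<open>l (f\<^sub>x, f\<^sub>y)\<close>, and the matrix maps the tangent vector
  \<open>(u, v)\<close> at \<open>p\<close> to \<open>G (U, V)\<close>.\<close>
lemma gradient_tangent_jacobian_identity:
  fixes FX FY A B C D l fx fy u v U V G \<alpha> \<beta> J :: complex
  assumes "FX * A + FY * C = l * fx" "FX * B + FY * D = l * fy"
    and "A * u + B * v = U * G" "C * u + D * v = V * G"
    and "fy = \<alpha> * u" "fx = - \<alpha> * v" "FY = \<beta> * U" "FX = - \<beta> * V"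
    and "J = A * D - B * C" "u \<noteq> 0 \<or> v \<noteq> 0"
  shows "l * G * \<alpha> = J * \<beta>"
proof -
  have "(l * G * \<alpha> - J * \<beta>) * u = 0"
  proof -
    have "l * G * \<alpha> * u = G * (l * fy)" using assms(5) by (simp add: algebra_simps)
    also have "\<dots> = \<beta> * (D * (U * G) - B * (V * G))"
      unfolding assms(2)[symmetric] assms(7,8) by (simp add: algebra_simps)
    also have "\<dots> = J * \<beta> * u" unfolding assms(3,4)[symmetric] assms(9) by (simp add: algebra_simps)
    finally show ?thesis by (simp add: algebra_simps)
  qed
  moreover have "(l * G * \<alpha> - J * \<beta>) * v = 0"
  proof -
    have "l * G * \<alpha> * v = - G * (l * fx)" using assms(6) by (simp add: algebra_simps)
    also have "\<dots> = \<beta> * (A * (V * G) - C * (U * G))"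
      unfolding assms(1)[symmetric] assms(7,8) by (simp add: algebra_simps)
    also have "\<dots> = J * \<beta> * v" unfolding assms(3,4)[symmetric] assms(9) by (simp add: algebra_simps)
    finally show ?thesis by (simp add: algebra_simps)
  qed
  ultimately show ?thesis using assms(10) by auto
qed

locale Gamma_embedding_rot_extension = Gamma_embedding +
  fixes H1 H2 K1 K2 :: "complex poly poly"
  assumes H1: "\<And>t. t \<in> Gamma \<Longrightarrow> bpoly H1 (x t) (y t) = x (gamma_rot t)"
    and H2: "\<And>t. t \<in> Gamma \<Longrightarrow> bpoly H2 (x t) (y t) = y (gamma_rot t)"
    and KH1: "\<And>a b. bpoly K1 (bpoly H1 a b) (bpoly H2 a b) = a"
    and KH2: "\<And>a b. bpoly K2 (bpoly H1 a b) (bpoly H2 a b) = b"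
    and HK1: "\<And>a b. bpoly H1 (bpoly K1 a b) (bpoly K2 a b) = a"
    and HK2: "\<And>a b. bpoly H2 (bpoly K1 a b) (bpoly K2 a b) = b"
begin

lemma generates_curve_ideal_semi_invariant:
  assumes F: "generates_curve_ideal F" "F \<noteq> 0"
  shows "\<exists>l. l \<noteq> 0 \<and> (\<forall>a b. bpoly F (bpoly H1 a b) (bpoly H2 a b) = l * bpoly F a b)"
proof -
  obtain FH where FH: "\<And>a b. bpoly F (bpoly H1 a b) (bpoly H2 a b) = bpoly FH a b"
    using bpoly_comp_eq_bpoly by blast
  obtain FK where FK: "\<And>a b. bpoly F (bpoly K1 a b) (bpoly K2 a b) = bpoly FK a b"
    using bpoly_comp_eq_bpoly by blast
  have "vanishes_on_curve FH"
    using F(1) H1 H2 gamma_rot_in_Gamma FH[symmetric]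
    unfolding generates_curve_ideal_def vanishes_on_curve_def by simp
  then obtain A where A: "FH = F * A" using F(1) unfolding generates_curve_ideal_def by blast
  have "bpoly K1 (x t) (y t) = x (1 - 1 / t) \<and> bpoly K2 (x t) (y t) = y (1 - 1 / t)" if "t \<in> Gamma" for t
    using KH1 KH2 H1 H2 gamma_rot_inverse[OF that] by metis
  hence "vanishes_on_curve FK"
    using F(1) gamma_rot_inverse FK[symmetric]
    unfolding generates_curve_ideal_def vanishes_on_curve_def by simp
  then obtain B where B: "FK = F * B" using F(1) unfolding generates_curve_ideal_def by blast
  obtain l where "l \<noteq> 0" "\<forall>a b. bpoly A a b = l"
    using bpoly_semi_invariant_imp_const[OF F(2) KH1 KH2 HK1 HK2, of A B] FH FK A B by auto
  thus ?thesis using FH A by (auto simp: mult.commute)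
qed

lemma residue_gamma_rot_eigenform:
  assumes l: "\<And>a b. bpoly F (bpoly H1 a b) (bpoly H2 a b) = l * bpoly F a b"
    and J: "\<And>a b. bpoly (jacobian H1 H2) a b = J"
    and x': "\<And>t. t \<in> Gamma \<Longrightarrow> (x has_field_derivative x' t) (at t)"
    and y': "\<And>t. t \<in> Gamma \<Longrightarrow> (y has_field_derivative y' t) (at t)"
    and \<alpha>: "\<And>t. t \<in> Gamma \<Longrightarrow>
      bpoly (pderiv_y F) (x t) (y t) = \<alpha> t * x' t \<and> - bpoly (pderiv_x F) (x t) (y t) = \<alpha> t * y' t"
    and t: "t \<in> Gamma"
  shows "l * \<alpha> t / (1 - t)\<^sup>2 = J * \<alpha> (gamma_rot t)"
proof -
  let ?D = "\<lambda>G. bpoly G (x t) (y t)" and ?s = "gamma_rot t"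
  have s: "?s \<in> Gamma" using gamma_rot_in_Gamma[OF t] .
  have lF: "bpoly F (bpoly H1 a b) (bpoly H2 a b) = bpoly ([:[:l:]:] * F) a b" for a b
    by (simp only: bpoly_mult bpoly_const l)
  have l_pderiv: "bpoly (pderiv_x ([:[:l:]:] * F)) a b = l * bpoly (pderiv_x F) a b"
    "bpoly (pderiv_y ([:[:l:]:] * F)) a b = l * bpoly (pderiv_y F) a b" for a b
    by (simp_all only: bpoly_pderiv_x_mult bpoly_pderiv_y_mult) (simp_all add: pderiv_pCons)
  have "l * (1 / (1 - t)\<^sup>2) * \<alpha> t = J * \<alpha> ?s"
  proof (rule gradient_tangent_jacobian_identity)
    show "bpoly (pderiv_x F) (x ?s) (y ?s) * ?D (pderiv_x H1) + bpoly (pderiv_y F) (x ?s) (y ?s) * ?D (pderiv_x H2)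
        = l * ?D (pderiv_x F)"
         "bpoly (pderiv_x F) (x ?s) (y ?s) * ?D (pderiv_y H1) + bpoly (pderiv_y F) (x ?s) (y ?s) * ?D (pderiv_y H2)
        = l * ?D (pderiv_y F)"
      using bpoly_comp_pderiv_x[OF lF, of "x t" "y t"] bpoly_comp_pderiv_y[OF lF, of "x t" "y t"]
      unfolding H1[OF t] H2[OF t] l_pderiv by simp_all
    have chain: "((\<lambda>t. z (gamma_rot t)) has_field_derivative d * (1 / (1 - t)\<^sup>2)) (at t)"
      if "(z has_field_derivative d) (at ?s)" for z d
      using DERIV_chain2[OF that gamma_rot_has_field_derivative[OF t]] .
    show "?D (pderiv_x H1) * x' t + ?D (pderiv_y H1) * y' t = x' ?s * (1 / (1 - t)\<^sup>2)"
      using has_field_derivative_unique_on_Gamma[OF t bpoly_has_field_derivative[OF x'[OF t] y'[OF t]]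
          chain[OF x'[OF s]]] H1 by blast
    show "?D (pderiv_x H2) * x' t + ?D (pderiv_y H2) * y' t = y' ?s * (1 / (1 - t)\<^sup>2)"
      using has_field_derivative_unique_on_Gamma[OF t bpoly_has_field_derivative[OF x'[OF t] y'[OF t]]
          chain[OF y'[OF s]]] H2 by blast
    show "?D (pderiv_y F) = \<alpha> t * x' t" "?D (pderiv_x F) = - \<alpha> t * y' t"
      using \<alpha>[OF t] by (auto simp flip: minus_equation_iff)
    show "bpoly (pderiv_y F) (x ?s) (y ?s) = \<alpha> ?s * x' ?s" "bpoly (pderiv_x F) (x ?s) (y ?s) = - \<alpha> ?s * y' ?s"
      using \<alpha>[OF s] by (auto simp flip: minus_equation_iff)
    show "J = ?D (pderiv_x H1) * ?D (pderiv_y H2) - ?D (pderiv_y H1) * ?D (pderiv_x H2)"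
      using J[of "x t" "y t"] by (simp add: jacobian_def)
    show "x' t \<noteq> 0 \<or> y' t \<noteq> 0" using tangent_nonzero[OF t x'[OF t] y'[OF t]] .
  qed
  thus ?thesis by simp
qed

theorem rot_extension_impossible: False
proof -
  obtain F where F: "F \<noteq> 0" "generates_curve_ideal F" using generates_curve_ideal_exists by blast
  obtain l where l: "l \<noteq> 0" "\<And>a b. bpoly F (bpoly H1 a b) (bpoly H2 a b) = l * bpoly F a b"
    using generates_curve_ideal_semi_invariant[OF F(2,1)] by blast
  obtain J where J: "J \<noteq> 0" "\<And>a b. bpoly (jacobian H1 H2) a b = J"
    using jacobian_const_if_left_inverse[OF KH1 KH2] by blast
  obtain x' where x': "regular_Gamma x'" "\<And>t. t \<in> Gamma \<Longrightarrow> (x has_field_derivative x' t) (at t)"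
    using regular_Gamma_has_regular_derivative[OF regular_x] by blast
  obtain y' where y': "regular_Gamma y'" "\<And>t. t \<in> Gamma \<Longrightarrow> (y has_field_derivative y' t) (at t)"
    using regular_Gamma_has_regular_derivative[OF regular_y] by blast
  obtain \<alpha> c i j a b where "c \<noteq> 0" "\<And>t. t \<in> Gamma \<Longrightarrow> \<alpha> t = c * t ^ i * (t - 1) ^ j / (t ^ a * (t - 1) ^ b)"
    and \<alpha>: "\<And>t. t \<in> Gamma \<Longrightarrow>
      bpoly (pderiv_y F) (x t) (y t) = \<alpha> t * x' t \<and> - bpoly (pderiv_x F) (x t) (y t) = \<alpha> t * y' t"
    using generates_curve_ideal_gradient_eq_unit_mult[OF F(2) x' y'] by blast
  with residue_gamma_rot_eigenform[OF l(2) J(2) x'(2) y'(2) \<alpha>] show False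
    using unit_not_gamma_rot_eigenform l(1) J(1) by blast
qed

end

lemma closed_embedding_Gamma_A2_imp_Gamma_embedding:
  assumes "closed_embedding_Gamma_A2 \<tau>"
  shows "\<exists>P Q R. Gamma_embedding (\<lambda>t. fst (\<tau> t)) (\<lambda>t. snd (\<tau> t)) P Q R"
proof -
  obtain P Q R where PQR: "poly2 P" "poly2 Q" "poly2 R"
    "\<forall>t\<in>Gamma. P (\<tau> t) = t \<and> Q (\<tau> t) = 1 / t \<and> R (\<tau> t) = 1 / (t - 1)"
    and regular: "regular_Gamma (\<lambda>t. fst (\<tau> t))" "regular_Gamma (\<lambda>t. snd (\<tau> t))"
    using assms unfolding closed_embedding_Gamma_A2_def morphism_Gamma_A2_def by blast
  obtain P' Q' R' where "\<forall>z. P z = bpoly P' (fst z) (snd z)" "\<forall>z. Q z = bpoly Q' (fst z) (snd z)"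
    "\<forall>z. R z = bpoly R' (fst z) (snd z)"
    using poly2_eq_bpoly PQR(1-3) by metis
  hence "Gamma_embedding (\<lambda>t. fst (\<tau> t)) (\<lambda>t. snd (\<tau> t)) P' Q' R'"
    using PQR(4) regular by unfold_locales metis+
  thus ?thesis by blast
qed

lemma Aut_A2_bpolyE:
  assumes "h \<in> Aut_A2"
  obtains H1 H2 K1 K2 where "\<And>z. h z = (bpoly H1 (fst z) (snd z), bpoly H2 (fst z) (snd z))"
    and "\<And>a b. bpoly K1 (bpoly H1 a b) (bpoly H2 a b) = a" "\<And>a b. bpoly K2 (bpoly H1 a b) (bpoly H2 a b) = b"
    and "\<And>a b. bpoly H1 (bpoly K1 a b) (bpoly K2 a b) = a" "\<And>a b. bpoly H2 (bpoly K1 a b) (bpoly K2 a b) = b"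
proof -
  obtain h' where h: "poly_map_A2 h" "poly_map_A2 h'" "\<forall>z. h' (h z) = z \<and> h (h' z) = z"
    using assms unfolding Aut_A2_def by blast
  obtain H1 H2 K1 K2 where
    "\<forall>z. fst (h z) = bpoly H1 (fst z) (snd z)" "\<forall>z. snd (h z) = bpoly H2 (fst z) (snd z)"
    "\<forall>z. fst (h' z) = bpoly K1 (fst z) (snd z)" "\<forall>z. snd (h' z) = bpoly K2 (fst z) (snd z)"
    using poly2_eq_bpoly h(1,2) unfolding poly_map_A2_def by metis
  hence "h z = (bpoly H1 (fst z) (snd z), bpoly H2 (fst z) (snd z))"
    "h' z = (bpoly K1 (fst z) (snd z), bpoly K2 (fst z) (snd z))" for z
    by (metis prod.collapse)+
  with h(3) show ?thesis using that by (metis fst_conv snd_conv)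
qed

theorem mainTheorem4:
  assumes "closed_embedding_Gamma_A2 \<tau>"
  shows "\<exists>g\<in>Aut_Gamma. \<not> (\<exists>h\<in>Aut_A2. \<forall>t\<in>Gamma. h (\<tau> t) = \<tau> (g t))"
proof
  show "\<not> (\<exists>h\<in>Aut_A2. \<forall>t\<in>Gamma. h (\<tau> t) = \<tau> (gamma_rot t))"
  proof
    assume "\<exists>h\<in>Aut_A2. \<forall>t\<in>Gamma. h (\<tau> t) = \<tau> (gamma_rot t)"
    then obtain h where h: "h \<in> Aut_A2" "\<forall>t\<in>Gamma. h (\<tau> t) = \<tau> (gamma_rot t)" by blast
    obtain P Q R where emb: "Gamma_embedding (\<lambda>t. fst (\<tau> t)) (\<lambda>t. snd (\<tau> t)) P Q R"
      using closed_embedding_Gamma_A2_imp_Gamma_embedding[OF assms] by blast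
    obtain H1 H2 K1 K2 where H: "\<And>z. h z = (bpoly H1 (fst z) (snd z), bpoly H2 (fst z) (snd z))"
      and inverse: "\<And>a b. bpoly K1 (bpoly H1 a b) (bpoly H2 a b) = a" "\<And>a b. bpoly K2 (bpoly H1 a b) (bpoly H2 a b) = b"
        "\<And>a b. bpoly H1 (bpoly K1 a b) (bpoly K2 a b) = a" "\<And>a b. bpoly H2 (bpoly K1 a b) (bpoly K2 a b) = b"
      using Aut_A2_bpolyE[OF h(1)] by blast
    have "Gamma_embedding_rot_extension (\<lambda>t. fst (\<tau> t)) (\<lambda>t. snd (\<tau> t)) P Q R H1 H2 K1 K2"
      using emb h(2) inverse H
      by (intro Gamma_embedding_rot_extension.intro Gamma_embedding_rot_extension_axioms.intro) (metis fst_conv snd_conv)+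
    thus False by (rule Gamma_embedding_rot_extension.rot_extension_impossible)
  qed
qed (rule gamma_rot_in_Aut_Gamma)

end
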